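(* Let $S$ be the submonoid of $\mathbb N^d$ generated by $\mathcal A=\{\mathbf a_1,\dots,\mathbf a_n\}$ and let $\mathbf a\in\mathrm{PF}(S)$. If $2\mathbf a\in S$, then $S\cup\{\mathbf a\}$ is the submonoid of $\mathbb N^d$ generated by $\mathcal A\cup\{\mathbf a\}$. Moreover: (a) if $\mathbf a\in\mathrm F(S)$ and $\mathrm{PF}(S)\neq\{\mathbf a\}$, then $S\cup\{\mathbf a\}$ is an MPD-semigroup; (b) if $S$ is a $\mathcal C$-semigroup, then $S\cup\{\mathbf a\}$ is a $\mathcal C$-semigroup.
   Context: For a finitely generated submonoid $T\subseteq\mathbb N^d$ generated by $\mathbf t_1,\dots,\mathbf t_m$: $\mathrm{pos}(T)=\{\sum\lambda_i\mathbf t_i:\lambda_i\in\mathbb Q_{\ge0}\}$, $\mathcal H(T)=(\mathrm{pos}(T)\setminus T)\cap\mathbb N^d$, $\mathrm{PF}(T)=\{\mathbf b\in\mathcal H(T):\mathbf b+(T\setminus\{0\})\subseteq T\}$; $T$ is an MPD-semigroup if for a field $\Bbbk$ the $\Bbbk[x_1,\dots,x_m]$-module $\Bbbk[T]$ (via $x_i\mapsto\chi^{\mathbf t_i}$) has projective dimension $m-1$ (equivalently depth $1$); $T$ is a $\mathcal C$-semigroup if $\mathcal H(T)$ is finite. A term order on $\mathbb N^d$ is a total order compatible with addition with $0$ least; $\mathrm F(T)$ is the set of $\mathbf f\in\mathcal H(T)$ with $\mathbf f=\max_\prec\mathcal H(T)$ for some term order $\prec$ (Frobenius elements). *)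

theory Defs
  imports Complex_Main "HOL-Library.Function_Algebras" "HOL-Library.Poly_Mapping"
begin

text \<open>Elements of N^d are functions 'd \<Rightarrow> nat for a finite index type 'd
  (pointwise addition, zero vector 0).\<close>

inductive_set monoid_gen :: "('d \<Rightarrow> nat) set \<Rightarrow> ('d \<Rightarrow> nat) set"
  for A :: "('d \<Rightarrow> nat) set" where
  zero: "0 \<in> monoid_gen A"
| gen: "a \<in> A \<Longrightarrow> a \<in> monoid_gen A"
| add: "x \<in> monoid_gen A \<Longrightarrow> y \<in> monoid_gen A \<Longrightarrow> x + y \<in> monoid_gen A"

definition pos_cone :: "('d \<Rightarrow> nat) set \<Rightarrow> ('d \<Rightarrow> rat) set" where
  "pos_cone T = {v. \<exists>F c. finite F \<and> F \<subseteq> T \<and> (\<forall>t\<in>F. c t \<ge> 0) \<and>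
      v = (\<Sum>t\<in>F. (\<lambda>j. c t * of_nat (t j)))}"

definition holes :: "('d \<Rightarrow> nat) set \<Rightarrow> ('d \<Rightarrow> nat) set" where
  "holes T = {b. (\<lambda>j. of_nat (b j) :: rat) \<in> pos_cone T \<and> b \<notin> T}"

definition PF :: "('d \<Rightarrow> nat) set \<Rightarrow> ('d \<Rightarrow> nat) set" where
  "PF T = {b \<in> holes T. \<forall>t \<in> T - {0}. b + t \<in> T}"

definition term_order :: "(('d \<Rightarrow> nat) \<Rightarrow> ('d \<Rightarrow> nat) \<Rightarrow> bool) \<Rightarrow> bool" where
  "term_order le \<longleftrightarrow>
     (\<forall>x. le x x) \<and> (\<forall>x y. le x y \<and> le y x \<longrightarrow> x = y) \<and>
     (\<forall>x y z. le x y \<and> le y z \<longrightarrow> le x z) \<and> (\<forall>x y. le x y \<or> le y x) \<and>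
     (\<forall>x y z. le x y \<longrightarrow> le (x + z) (y + z)) \<and> (\<forall>x. le 0 x)"

definition Frob :: "('d \<Rightarrow> nat) set \<Rightarrow> ('d \<Rightarrow> nat) set" where
  "Frob T = {f \<in> holes T. \<exists>le. term_order le \<and> (\<forall>h \<in> holes T. le h f)}"

definition C_semigroup :: "('d \<Rightarrow> nat) set \<Rightarrow> bool" where
  "C_semigroup T \<longleftrightarrow> finite (holes T)"

text \<open>The semigroup ring k[T] (finitely supported k-valued functions on N^d
  supported in T, with convolution product), and the image in k[T] of the
  homogeneous maximal ideal (x_1,...,x_m) of k[x_1,...,x_m]: the span of
  the monomials chi^t, t \<in> T - {0}.\<close>
definition sgr :: "'k itself \<Rightarrow> ('d \<Rightarrow> nat) set \<Rightarrow> (('d \<Rightarrow> nat) \<Rightarrow>\<^sub>0 'k::field) set" where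
  "sgr _ T = {p. Poly_Mapping.keys p \<subseteq> T}"

definition sgr_max :: "'k itself \<Rightarrow> ('d \<Rightarrow> nat) set \<Rightarrow> (('d \<Rightarrow> nat) \<Rightarrow>\<^sub>0 'k::field) set" where
  "sgr_max _ T = {p. Poly_Mapping.keys p \<subseteq> T - {0}}"

text \<open>depth of k[T] (as module over the polynomial ring) is at least 1: there is
  a k[T]-regular sequence of length 1 in the maximal ideal.\<close>
definition depth_ge1 :: "'k::field itself \<Rightarrow> ('d \<Rightarrow> nat) set \<Rightarrow> bool" where
  "depth_ge1 K T \<longleftrightarrow> (\<exists>f \<in> sgr_max K T.
      (\<forall>h \<in> sgr K T. f * h = 0 \<longrightarrow> h = 0) \<and>
      (\<forall>q \<in> sgr K T. f * q \<noteq> 1))"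

text \<open>depth at least 2: a regular sequence f, g of length 2 in the maximal ideal.\<close>
definition depth_ge2 :: "'k::field itself \<Rightarrow> ('d \<Rightarrow> nat) set \<Rightarrow> bool" where
  "depth_ge2 K T \<longleftrightarrow> (\<exists>f \<in> sgr_max K T. \<exists>g \<in> sgr_max K T.
      (\<forall>h \<in> sgr K T. f * h = 0 \<longrightarrow> h = 0) \<and>
      (\<forall>h \<in> sgr K T. (\<exists>q \<in> sgr K T. g * h = f * q) \<longrightarrow> (\<exists>q \<in> sgr K T. h = f * q)) \<and>
      (\<forall>p \<in> sgr K T. \<forall>q \<in> sgr K T. f * p + g * q \<noteq> 1))"

text \<open>MPD-semigroup over the field 'k: depth k[T] = 1 (equivalently, by
  Auslander--Buchsbaum, projective dimension m-1).\<close>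
definition MPD_semigroup :: "'k::field itself \<Rightarrow> ('d \<Rightarrow> nat) set \<Rightarrow> bool" where
  "MPD_semigroup K T \<longleftrightarrow> depth_ge1 K T \<and> \<not> depth_ge2 K T"

end

theory Submission
  imports Defs
begin

text \<open>Since \<open>a\<close> is pseudo-Frobenius and \<open>2a \<in> S\<close>, the set \<open>S \<union> {a}\<close> is closed under
  addition, and \<open>a = (2a)/2\<close> lies in the cone of \<open>S\<close>, so adjoining \<open>a\<close> does not enlarge the
  cone and the holes can only shrink. If moreover \<open>a\<close> is a Frobenius element, maximal for a
  term order, then for every other pseudo-Frobenius \<open>b\<close> the element \<open>b + a\<close> of the cone
  exceeds \<open>a\<close> and so is not a hole: \<open>b\<close> remains pseudo-Frobenius in \<open>S \<union> {a}\<close>. Finally an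
  affine semigroup ring with a nonzero degree and a pseudo-Frobenius element has depth exactly
  one: a nonzero monomial is regular, and \<open>\<chi>\<^sup>b\<close> obstructs every regular sequence of length two.\<close>

lemma monoid_gen_mono: "A \<subseteq> B \<Longrightarrow> monoid_gen A \<subseteq> monoid_gen B"
proof
  show "x \<in> monoid_gen B" if "x \<in> monoid_gen A" "A \<subseteq> B" for x
    using that by (induction rule: monoid_gen.induct) (auto intro: monoid_gen.intros)
qed

lemma monoid_gen_least:
  assumes "0 \<in> T" "A \<subseteq> T" "\<And>x y. x \<in> T \<Longrightarrow> y \<in> T \<Longrightarrow> x + y \<in> T"
  shows "monoid_gen A \<subseteq> T"
proof
  show "x \<in> T" if "x \<in> monoid_gen A" for x
    using that by (induction rule: monoid_gen.induct) (use assms in blast)+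
qed

lemma insert_PF_add_closed:
  assumes add: "\<And>x y. x \<in> S \<Longrightarrow> y \<in> S \<Longrightarrow> x + y \<in> S"
    and "a \<in> PF S" "a + a \<in> S" "x \<in> insert a S" "y \<in> insert a S"
  shows "x + y \<in> insert a S"
proof -
  have shift: "a + t \<in> insert a S" if "t \<in> S" for t
    using that \<open>a \<in> PF S\<close> by (cases "t = 0") (auto simp: PF_def)
  show ?thesis
    using assms(3-) add shift[of x] shift[of y] by (auto simp: add.commute)
qed

lemma monoid_gen_insert_PF:
  assumes "a \<in> PF (monoid_gen A)" "a + a \<in> monoid_gen A"
  shows "monoid_gen (insert a A) = insert a (monoid_gen A)"
proof
  show "monoid_gen (insert a A) \<subseteq> insert a (monoid_gen A)"
    by (intro monoid_gen_least insert_PF_add_closed[OF _ assms])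
       (auto intro: monoid_gen.intros)
  show "insert a (monoid_gen A) \<subseteq> monoid_gen (insert a A)"
    using monoid_gen_mono[of A "insert a A"] by (auto intro: monoid_gen.gen)
qed

lemma sum_fun_apply: "(\<Sum>i\<in>I. f i) x = (\<Sum>i\<in>I. f i x)"
  by (induction I rule: infinite_finite_induct) auto

lemma of_nat_in_pos_cone:
  assumes "t \<in> T"
  shows "(\<lambda>j. of_nat (t j)) \<in> pos_cone T"
  unfolding pos_cone_def using assms
  by (intro CollectI exI[of _ "{t}"] exI[of _ "\<lambda>_. 1"]) auto

lemma pos_cone_scale:
  assumes "v \<in> pos_cone T" "c \<ge> 0"
  shows "(\<lambda>j. c * v j) \<in> pos_cone T"
proof -
  obtain F d where F: "finite F" "F \<subseteq> T" "\<forall>t\<in>F. d t \<ge> 0"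
    and v: "v = (\<Sum>t\<in>F. (\<lambda>j. d t * of_nat (t j)))"
    using assms(1) unfolding pos_cone_def by blast
  have "(\<lambda>j. c * v j) = (\<Sum>t\<in>F. (\<lambda>j. (c * d t) * of_nat (t j)))"
    by (simp add: v fun_eq_iff sum_fun_apply sum_distrib_left mult.assoc)
  then show ?thesis
    unfolding pos_cone_def using F assms(2)
    by (intro CollectI exI[of _ F] exI[of _ "\<lambda>t. c * d t"]) auto
qed

lemma pos_cone_add:
  assumes "u \<in> pos_cone T" "v \<in> pos_cone T"
  shows "u + v \<in> pos_cone T"
proof -
  obtain F1 c1 where F1: "finite F1" "F1 \<subseteq> T" "\<forall>t\<in>F1. c1 t \<ge> 0"
    and u: "u = (\<Sum>t\<in>F1. (\<lambda>j. c1 t * of_nat (t j)))"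
    using assms(1) unfolding pos_cone_def by blast
  obtain F2 c2 where F2: "finite F2" "F2 \<subseteq> T" "\<forall>t\<in>F2. c2 t \<ge> 0"
    and v: "v = (\<Sum>t\<in>F2. (\<lambda>j. c2 t * of_nat (t j)))"
    using assms(2) unfolding pos_cone_def by blast
  define c1' where "c1' t = (if t \<in> F1 then c1 t else 0)" for t
  define c2' where "c2' t = (if t \<in> F2 then c2 t else 0)" for t
  have fin: "finite (F1 \<union> F2)"
    using F1 F2 by auto
  have "u = (\<Sum>t\<in>F1 \<union> F2. (\<lambda>j. c1' t * of_nat (t j)))"
    unfolding u by (rule sum.mono_neutral_cong_left[OF fin]) (auto simp: c1'_def fun_eq_iff)
  moreover have "v = (\<Sum>t\<in>F1 \<union> F2. (\<lambda>j. c2' t * of_nat (t j)))"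
    unfolding v by (rule sum.mono_neutral_cong_left[OF fin]) (auto simp: c2'_def fun_eq_iff)
  ultimately have "u + v = (\<Sum>t\<in>F1 \<union> F2. (\<lambda>j. (c1' t + c2' t) * of_nat (t j)))"
    by (simp add: fun_eq_iff sum_fun_apply sum.distrib distrib_right)
  then show ?thesis
    unfolding pos_cone_def using fin F1 F2
    by (intro CollectI exI[of _ "F1 \<union> F2"] exI[of _ "\<lambda>t. c1' t + c2' t"])
       (auto simp: c1'_def c2'_def)
qed

lemma pos_cone_subset:
  assumes "\<And>t. t \<in> T \<Longrightarrow> (\<lambda>j. of_nat (t j)) \<in> pos_cone S"
  shows "pos_cone T \<subseteq> pos_cone S"
proof
  fix v assume "v \<in> pos_cone T"
  then obtain F c where F: "finite F" "F \<subseteq> T" "\<forall>t\<in>F. c t \<ge> 0"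
    and v: "v = (\<Sum>t\<in>F. (\<lambda>j. c t * of_nat (t j)))"
    unfolding pos_cone_def by blast
  have "(\<Sum>t\<in>F. (\<lambda>j. c t * of_nat (t j))) \<in> pos_cone S"
    using F
  proof (induction F rule: finite_induct)
    case empty
    show ?case
      unfolding pos_cone_def by (intro CollectI exI[of _ "{}"]) auto
  next
    case (insert t F)
    then show ?case
      unfolding sum.insert[OF insert.hyps]
      by (intro pos_cone_add pos_cone_scale assms) auto
  qed
  then show "v \<in> pos_cone S"
    using v by simp
qed

lemma pos_cone_mono: "S \<subseteq> T \<Longrightarrow> pos_cone S \<subseteq> pos_cone T"
  by (intro pos_cone_subset of_nat_in_pos_cone) auto

lemma holes_insert_subset:
  assumes "a + a \<in> S"
  shows "holes (insert a S) \<subseteq> holes S"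
proof -
  have "(\<lambda>j. (1/2) * of_nat ((a + a) j) :: rat) \<in> pos_cone S"
    by (intro pos_cone_scale of_nat_in_pos_cone assms) simp
  moreover have "(\<lambda>j. (1/2) * of_nat ((a + a) j) :: rat) = (\<lambda>j. of_nat (a j))"
    by (simp add: fun_eq_iff)
  ultimately have "(\<lambda>j. of_nat (a j) :: rat) \<in> pos_cone S"
    by simp
  then have "pos_cone (insert a S) \<subseteq> pos_cone S"
    by (intro pos_cone_subset) (auto intro: of_nat_in_pos_cone)
  then show ?thesis
    unfolding holes_def by auto
qed

lemma term_order_le_add:
  assumes "term_order le"
  shows "le x (y + x)"
  using assms unfolding term_order_def by (metis add_0)

lemma Frob_add_hole_mem:
  assumes "f \<in> Frob S" "h \<in> holes S" "h \<noteq> 0"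
  shows "h + f \<in> S"
proof (rule ccontr)
  assume "h + f \<notin> S"
  obtain le where le: "term_order le" and max: "\<And>h'. h' \<in> holes S \<Longrightarrow> le h' f"
    using assms(1) unfolding Frob_def by blast
  have "f \<in> holes S"
    using assms(1) unfolding Frob_def by blast
  then have "(\<lambda>j. of_nat ((h + f) j) :: rat) \<in> pos_cone S"
    using pos_cone_add[of "\<lambda>j. of_nat (h j)" S "\<lambda>j. of_nat (f j)"] assms(2)
    by (simp add: holes_def plus_fun_def)
  with \<open>h + f \<notin> S\<close> have "le (h + f) f"
    by (intro max) (simp add: holes_def)
  moreover have "le f (h + f)"
    using le by (rule term_order_le_add)
  ultimately have "h + f = f"
    using le unfolding term_order_def by blast
  with assms(3) show False
    by (simp add: fun_eq_iff)
qed

lemma PF_insert_Frob: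
  assumes "0 \<in> S" "a \<in> Frob S" "b \<in> PF S" "b \<noteq> a"
  shows "b \<in> PF (insert a S)"
proof -
  have b: "b \<in> holes S" "\<And>t. t \<in> S - {0} \<Longrightarrow> b + t \<in> S"
    using assms(3) unfolding PF_def by auto
  then have "b \<notin> S"
    unfolding holes_def by blast
  with assms(1) have "b + a \<in> S"
    using Frob_add_hole_mem[OF assms(2) b(1)] by auto
  moreover have "b \<in> holes (insert a S)"
    using b(1) \<open>b \<notin> S\<close> assms(4) pos_cone_mono[of S "insert a S"]
    unfolding holes_def by auto
  ultimately show ?thesis
    using b(2) unfolding PF_def by auto
qed

lemma lookup_single_one_mult:
  fixes p :: "'a::cancel_comm_monoid_add \<Rightarrow>\<^sub>0 'b::semiring_1"
  shows "Poly_Mapping.lookup (Poly_Mapping.single t 1 * p) k =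
    (\<Sum>s. Poly_Mapping.lookup p s when k = t + s)"
  unfolding lookup_mult lookup_single when_mult by (simp add: when_def)

lemma lookup_single_one_mult_add:
  fixes p :: "'a::cancel_comm_monoid_add \<Rightarrow>\<^sub>0 'b::semiring_1"
  shows "Poly_Mapping.lookup (Poly_Mapping.single t 1 * p) (t + s) = Poly_Mapping.lookup p s"
  by (simp add: lookup_single_one_mult when_def)

lemma lookup_single_one_mult_eq_0:
  fixes p :: "'a::cancel_comm_monoid_add \<Rightarrow>\<^sub>0 'b::semiring_1"
  assumes "\<And>s. k \<noteq> t + s"
  shows "Poly_Mapping.lookup (Poly_Mapping.single t 1 * p) k = 0"
  using assms by (simp add: lookup_single_one_mult when_def)

lemma single_one_mult_eq_0_iff:
  fixes p :: "'a::cancel_comm_monoid_add \<Rightarrow>\<^sub>0 'b::semiring_1"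
  shows "Poly_Mapping.single t 1 * p = 0 \<longleftrightarrow> p = 0"
  by (metis lookup_single_one_mult_add lookup_zero mult_zero_right poly_mapping_eqI)

lemma keys_single_one_mult:
  fixes p :: "'a::cancel_comm_monoid_add \<Rightarrow>\<^sub>0 'b::semiring_1"
  shows "Poly_Mapping.keys (Poly_Mapping.single t 1 * p) \<subseteq> (+) t ` Poly_Mapping.keys p"
  using keys_mult[of "Poly_Mapping.single t (1::'b)" p]
  by (cases "(1::'b) = 0") auto

lemma depth_ge1_if_nonzero:
  fixes T :: "('d \<Rightarrow> nat) set"
  assumes "a \<in> T" "a \<noteq> 0"
  shows "depth_ge1 TYPE('k::field) T"
  unfolding depth_ge1_def
proof (intro bexI[of _ "Poly_Mapping.single a 1"] conjI ballI impI)
  show "Poly_Mapping.single a (1::'k) \<in> sgr_max TYPE('k) T"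
    using assms unfolding sgr_max_def by simp
  show "h = 0" if "Poly_Mapping.single a (1::'k) * h = 0" for h
    using that by (simp add: single_one_mult_eq_0_iff)
  fix q :: "('d \<Rightarrow> nat) \<Rightarrow>\<^sub>0 'k"
  have "Poly_Mapping.lookup (Poly_Mapping.single a 1 * q) 0 = 0"
    using assms(2) by (intro lookup_single_one_mult_eq_0) (auto simp: fun_eq_iff)
  then show "Poly_Mapping.single a 1 * q \<noteq> 1"
    by (metis lookup_one_zero zero_neq_one)
qed

text \<open>Given a regular sequence \<open>f, g\<close>, the element \<open>h = \<chi>\<^sup>b f\<close> of \<open>k[T]\<close> satisfies
  \<open>g h = f (\<chi>\<^sup>b g)\<close>, so \<open>h = f q\<close> with \<open>q \<in> k[T]\<close>. Then \<open>f (\<chi>\<^bsup>a+b\<^esup> - \<chi>\<^sup>a q) = 0\<close>, so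
  \<open>\<chi>\<^bsup>a+b\<^esup> = \<chi>\<^sup>a q\<close> and \<open>b\<close> would be a degree of \<open>q\<close>, i.e. \<open>b \<in> T\<close>.\<close>

lemma not_depth_ge2_if_PF:
  fixes T :: "('d \<Rightarrow> nat) set"
  assumes add: "\<And>x y. x \<in> T \<Longrightarrow> y \<in> T \<Longrightarrow> x + y \<in> T"
    and "a \<in> T" "a \<noteq> 0" "b \<in> PF T"
  shows "\<not> depth_ge2 TYPE('k::field) T"
proof
  define \<chi> :: "('d \<Rightarrow> nat) \<Rightarrow> ('d \<Rightarrow> nat) \<Rightarrow>\<^sub>0 'k" where "\<chi> t = Poly_Mapping.single t 1" for t
  have bT: "b \<notin> T" and bshift: "\<And>t. t \<in> T - {0} \<Longrightarrow> b + t \<in> T"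
    using assms(4) unfolding PF_def holes_def by auto
  have sgr_shift: "\<chi> t * p \<in> sgr TYPE('k) T"
    if "\<And>v. v \<in> Poly_Mapping.keys p \<Longrightarrow> t + v \<in> T" for t p
    using keys_single_one_mult[of t p] that unfolding \<chi>_def sgr_def by auto
  assume "depth_ge2 TYPE('k) T"
  then obtain f g where f: "f \<in> sgr_max TYPE('k) T" and g: "g \<in> sgr_max TYPE('k) T"
    and f_regular: "\<forall>h \<in> sgr TYPE('k) T. f * h = 0 \<longrightarrow> h = 0"
    and g_regular: "\<forall>h \<in> sgr TYPE('k) T.
      (\<exists>q \<in> sgr TYPE('k) T. g * h = f * q) \<longrightarrow> (\<exists>q \<in> sgr TYPE('k) T. h = f * q)"
    unfolding depth_ge2_def by (elim bexE conjE) (rule that)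
  have "\<chi> b * f \<in> sgr TYPE('k) T" "\<chi> b * g \<in> sgr TYPE('k) T"
    using f g by (auto simp: sgr_max_def intro!: sgr_shift bshift)
  moreover have "g * (\<chi> b * f) = f * (\<chi> b * g)"
    by (simp add: ac_simps)
  ultimately obtain q where q: "q \<in> sgr TYPE('k) T" and hq: "\<chi> b * f = f * q"
    using g_regular by blast
  define w where "w = \<chi> (a + b) - \<chi> a * q"
  have "a + b \<in> T"
    using bshift[of a] assms(2,3) by (simp add: add.commute)
  moreover have "\<chi> a * q \<in> sgr TYPE('k) T"
    using q assms(2) add by (intro sgr_shift) (auto simp: sgr_def)
  ultimately have "w \<in> sgr TYPE('k) T"
    using keys_diff[of "\<chi> (a + b)" "\<chi> a * q"] unfolding w_def sgr_def by (auto simp: \<chi>_def)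
  moreover have "f * w = \<chi> a * (\<chi> b * f - f * q)"
    unfolding w_def \<chi>_def by (simp add: algebra_simps mult_single)
  ultimately have "w = 0"
    using f_regular hq by simp
  then have "\<chi> (a + b) = \<chi> a * q"
    unfolding w_def by simp
  then have "Poly_Mapping.lookup q b = 1"
    by (metis \<chi>_def lookup_single_eq lookup_single_one_mult_add)
  then have "b \<in> Poly_Mapping.keys q"
    by (simp add: in_keys_iff)
  with q bT show False
    unfolding sgr_def by blast
qed

theorem lemma4p1:
  fixes A :: "('d::finite \<Rightarrow> nat) set" and a :: "'d \<Rightarrow> nat"
  assumes "finite A"
    and "a \<in> PF (monoid_gen A)"
    and "a + a \<in> monoid_gen A"
  shows "monoid_gen A \<union> {a} = monoid_gen (insert a A)
    \<and> (a \<in> Frob (monoid_gen A) \<and> PF (monoid_gen A) \<noteq> {a}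
         \<longrightarrow> MPD_semigroup TYPE('k::field) (monoid_gen A \<union> {a}))
    \<and> (C_semigroup (monoid_gen A) \<longrightarrow> C_semigroup (monoid_gen A \<union> {a}))"
proof -
  let ?S = "monoid_gen A"
  have "a \<noteq> 0"
    using assms(2) monoid_gen.zero[of A] by (auto simp: PF_def holes_def)
  have MPD: "MPD_semigroup TYPE('k) (insert a ?S)"
    if "a \<in> Frob ?S" "b \<in> PF ?S" "b \<noteq> a" for b
    unfolding MPD_semigroup_def
    using depth_ge1_if_nonzero[OF insertI1 \<open>a \<noteq> 0\<close>]
      not_depth_ge2_if_PF[OF insert_PF_add_closed[OF monoid_gen.add assms(2,3)] insertI1 \<open>a \<noteq> 0\<close>
        PF_insert_Frob[OF monoid_gen.zero that]]
    by blast
  have "finite (holes (insert a ?S))" if "finite (holes ?S)"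
    using finite_subset[OF holes_insert_subset[OF assms(3)] that] .
  then show ?thesis
    using monoid_gen_insert_PF[OF assms(2,3)] MPD assms(2) unfolding C_semigroup_def by auto
qed

end
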